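(* Let $\Gamma=(G,\sigma)$ be a signed graph with $G=(V,E)$, $|V|=n$, and let $\alpha$ be the cardinality of a maximum independent set of $G$. Then for every $p>1$, $$\lambda_\alpha^{(p)}\le\max_{1\le i\le n}\frac{\sum_{j\sim i}w_{ij}+\kappa_i}{\mu_i}.$$
   Context: $G=(V,E)$ is a finite undirected graph without self-loops, $V=\{1,\dots,n\}$, $i\sim j$ means $\{i,j\}\in E$. A signed graph $\Gamma=(G,\sigma)$ has signature $\sigma:E\to\{\pm1\}$, edge weight $w:E\to(0,\infty)$, vertex measure $\mu:V\to(0,\infty)$, potential $\kappa:V\to\mathbb R$. For $p\ge1$ and nonzero $f$, $\mathcal R_p^\sigma(f)=\frac{\sum_{\{i,j\}\in E}w_{ij}|f(i)-\sigma_{ij}f(j)|^p+\sum_i\kappa_i|f(i)|^p}{\sum_i\mu_i|f(i)|^p}$; $\mathcal S_p=\{f:\sum_i\mu_i|f(i)|^p=1\}$; Krasnoselskii genus $\gamma(B)$ of closed symmetric $B\subset\mathbb R^n\setminus\{0\}$: least $k$ with an odd continuous map $B\to\mathbb R^k\setminus\{0\}$; $\mathcal F_k(\mathcal S_p)$ = closed symmetric $B\subset\mathcal S_p$ with $\gamma(B)\ge k$; $\lambda_k^{(p)}=\min_{B\in\mathcal F_k(\mathcal S_p)}\max_{f\in B}\mathcal R_p^\sigma(f)$. *)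

theory Defs
  imports "HOL-Analysis.Analysis" "HOL-Library.Extended_Nat"
begin

text \<open>Vertices are the elements of a finite type 'n (so V has CARD('n) = n elements);
  functions on V are vectors in real^'n. The graph is given by a symmetric irreflexive
  adjacency relation adj.\<close>

definition simple_graph :: "('n::finite \<Rightarrow> 'n \<Rightarrow> bool) \<Rightarrow> bool" where
  "simple_graph adj \<longleftrightarrow> (\<forall>i j. adj i j \<longrightarrow> adj j i) \<and> (\<forall>i. \<not> adj i i)"

definition independent_set :: "('n::finite \<Rightarrow> 'n \<Rightarrow> bool) \<Rightarrow> 'n set \<Rightarrow> bool" where
  "independent_set adj S \<longleftrightarrow> (\<forall>i\<in>S. \<forall>j\<in>S. \<not> adj i j)"

definition independence_number :: "('n::finite \<Rightarrow> 'n \<Rightarrow> bool) \<Rightarrow> nat" where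
  "independence_number adj = Max (card ` {S. independent_set adj S})"

text \<open>Sum over edges {i,j} of E: since |f i - s f j| = |f j - s f i| for s in {-1,1}
  and w, sg are symmetric, this equals half the sum over ordered adjacent pairs.\<close>
definition rayleigh_p ::
  "('n::finite \<Rightarrow> 'n \<Rightarrow> bool) \<Rightarrow> ('n \<Rightarrow> 'n \<Rightarrow> real) \<Rightarrow> ('n \<Rightarrow> 'n \<Rightarrow> real) \<Rightarrow>
   ('n \<Rightarrow> real) \<Rightarrow> ('n \<Rightarrow> real) \<Rightarrow> real \<Rightarrow> real^'n \<Rightarrow> real" where
  "rayleigh_p adj sg w mu kappa p f =
     ((1/2) * (\<Sum>i\<in>UNIV. \<Sum>j\<in>{j. adj i j}. w i j * \<bar>f$i - sg i j * f$j\<bar> powr p)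
       + (\<Sum>i\<in>UNIV. kappa i * \<bar>f$i\<bar> powr p))
     / (\<Sum>i\<in>UNIV. mu i * \<bar>f$i\<bar> powr p)"

definition p_sphere :: "('n::finite \<Rightarrow> real) \<Rightarrow> real \<Rightarrow> (real^'n) set" where
  "p_sphere mu p = {f. (\<Sum>i\<in>UNIV. mu i * \<bar>f$i\<bar> powr p) = 1}"

text \<open>An odd continuous map B \<rightarrow> R^k - {0} is given by its k real component functions,
  each continuous and odd on B, with no common zero on B.\<close>
definition odd_map_to_punctured :: "('a::real_normed_vector) set \<Rightarrow> nat \<Rightarrow> bool" where
  "odd_map_to_punctured B k \<longleftrightarrow>
     (\<exists>g :: nat \<Rightarrow> 'a \<Rightarrow> real.
        (\<forall>l<k. continuous_on B (g l) \<and> (\<forall>x\<in>B. g l (- x) = - g l x)) \<and>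
        (\<forall>x\<in>B. \<exists>l<k. g l x \<noteq> 0))"

definition kras_genus :: "('a::real_normed_vector) set \<Rightarrow> enat" where
  "kras_genus B = (if \<exists>k. odd_map_to_punctured B k
                   then enat (LEAST k. odd_map_to_punctured B k) else \<infinity>)"

definition genus_family :: "nat \<Rightarrow> (real^'n::finite) set \<Rightarrow> (real^'n) set set" where
  "genus_family k S = {B. B \<subseteq> S \<and> closed B \<and> uminus ` B = B \<and> kras_genus B \<ge> enat k}"

definition var_eigenvalue ::
  "('n::finite \<Rightarrow> 'n \<Rightarrow> bool) \<Rightarrow> ('n \<Rightarrow> 'n \<Rightarrow> real) \<Rightarrow> ('n \<Rightarrow> 'n \<Rightarrow> real) \<Rightarrow>
   ('n \<Rightarrow> real) \<Rightarrow> ('n \<Rightarrow> real) \<Rightarrow> real \<Rightarrow> nat \<Rightarrow> real" where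
  "var_eigenvalue adj sg w mu kappa p k =
     Inf ((\<lambda>B. Sup (rayleigh_p adj sg w mu kappa p ` B)) ` genus_family k (p_sphere mu p))"

end

(*
  Let S be a maximum independent set, so |S| = alpha, and let B be the set of functions on the
  p-sphere that vanish outside S. Every edge has an endpoint where such an f vanishes, so
  |f i - sigma_ij f j|^p = |f i|^p + |f j|^p and the Rayleigh quotient of f becomes a
  (mu |f|^p)-weighted average of the ratios (sum_j w_ij + kappa_i) / mu_i; hence the Rayleigh
  quotient is bounded on B by the maximal ratio. B is closed and symmetric, and p-normalisation
  is an odd continuous map from the Euclidean unit sphere of R^S into B, so by Borsuk-Ulam the
  genus of B is at least |S| and B competes in the min-max defining lambda_alpha.

  Borsuk-Ulam is derived from the library's mod-2 degree step for odd maps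
  (Borsuk_odd_mapping_degree_step), via: every odd self-map f of S^m has odd degree. By
  induction on m: approximate f by a smooth odd map g; on the equator S^(m-1) it misses some
  point q (Sard), and a reflection R taking q to the pole e gives an odd map R o g missing
  +e and -e on the equator. Flattening the band that the equator is mapped into onto the
  equator itself is a homotopy to an odd map G preserving S^(m-1); the degree step and the
  induction hypothesis make deg G odd, and deg G = deg R * deg f. Finally an odd map
  S^m -> S^(m-1), viewed as a self-map of S^m, is not onto, so its degree is 0, although by the
  degree step it has the parity of its restriction to S^(m-1), which is odd.
*)

theory Submission
  imports Defs "HOL-Homology.Homology"
begin

section \<open>Odd maps between unit spheres\<close>

lemma sgn_in_sphere_Int_subspace:
  fixes x :: "'a::real_normed_vector"
  assumes "subspace T" "x \<in> T" "x \<noteq> 0"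
  shows "sgn x \<in> sphere 0 1 \<inter> T"
  using assms by (simp add: norm_sgn sgn_div_norm subspace_mul)

lemma nonantipodal_maps_homotopic:
  fixes f g :: "'b::topological_space \<Rightarrow> 'a::real_normed_vector"
  assumes T: "subspace T" and cf: "continuous_on X f" and cg: "continuous_on X g"
    and fim: "f ` X \<subseteq> sphere 0 1 \<inter> T" and gim: "g ` X \<subseteq> sphere 0 1 \<inter> T"
    and nonantipodal: "\<And>x. x \<in> X \<Longrightarrow> f x \<noteq> - g x"
  shows "homotopic_with_canon (\<lambda>_. True) X (sphere 0 1 \<inter> T) f g"
proof -
  have "closed_segment (f x) (g x) \<subseteq> T - {0}" if x: "x \<in> X" for x
  proof -
    have f: "f x \<in> T" "norm (f x) = 1" and g: "g x \<in> T" "norm (g x) = 1"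
      using fim gim x by auto
    have "0 \<notin> closed_segment (f x) (g x)"
    proof
      assume "0 \<in> closed_segment (f x) (g x)"
      then obtain u where u: "(1 - u) *\<^sub>R f x = (- u) *\<^sub>R g x" "0 \<le> u" "u \<le> 1"
        by (auto simp: in_segment eq_neg_iff_add_eq_0)
      from u(1) have "norm ((1 - u) *\<^sub>R f x) = norm ((- u) *\<^sub>R g x)" by (rule arg_cong)
      then have "1 - u = u" using f g u(2,3) by simp
      then have "u *\<^sub>R f x = u *\<^sub>R (- g x)" "u \<noteq> 0"
        using u(1) by (simp_all only: scaleR_minus_left scaleR_minus_right)
      then show False using nonantipodal[OF x] scaleR_cancel_left by blast
    qed
    moreover have "closed_segment (f x) (g x) \<subseteq> T"
      using f g T by (simp add: closed_segment_subset subspace_imp_convex)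
    ultimately show ?thesis by blast
  qed
  then have "homotopic_with_canon (\<lambda>_. True) X (T - {0}) f g"
    by (rule homotopic_with_linear[OF cf cg])
  then have "homotopic_with_canon (\<lambda>_. True) X (sphere 0 1 \<inter> T) (sgn \<circ> f) (sgn \<circ> g)"
    by (rule homotopic_with_compose_continuous_left)
      (auto intro!: continuous_intros sgn_in_sphere_Int_subspace[OF T])
  then show ?thesis
    by (rule homotopic_with_eq) (use fim gim in \<open>auto simp: sgn_div_norm\<close>)
qed

lemma odd_polynomial_approximation:
  fixes f :: "'a::euclidean_space \<Rightarrow> 'b::euclidean_space"
  assumes "compact X" and X: "\<And>x. x \<in> X \<Longrightarrow> - x \<in> X"
    and "continuous_on X f" "subspace T" "f ` X \<subseteq> T"
    and odd: "\<And>x. x \<in> X \<Longrightarrow> f (- x) = - f x" and "0 < \<epsilon>"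
  obtains Q where "polynomial_function Q" "Q ` X \<subseteq> T" "\<And>x. Q (- x) = - Q x"
    "\<And>x. x \<in> X \<Longrightarrow> norm (f x - Q x) < \<epsilon>"
proof -
  obtain P where P: "polynomial_function P" "P ` X \<subseteq> T"
    and Pf: "\<And>x. x \<in> X \<Longrightarrow> norm (f x - P x) < \<epsilon>"
    using Stone_Weierstrass_polynomial_function_subspace[of X f \<epsilon> T] assms by blast
  define Q where "Q x = (1/2) *\<^sub>R (P x - P (- x))" for x
  show ?thesis
  proof
    have "polynomial_function (\<lambda>x. P (- x))"
      using polynomial_function_compose[OF polynomial_function_minus[OF polynomial_function_id]
          P(1)]
      by (simp add: o_def)
    then show "polynomial_function Q"
      unfolding Q_def by (intro polynomial_function_cmul polynomial_function_diff P(1))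
    show "Q ` X \<subseteq> T"
      using P(2) X \<open>subspace T\<close> by (auto simp: Q_def intro!: subspace_mul subspace_diff)
    show "Q (- x) = - Q x" for x
      by (simp add: Q_def algebra_simps)
    show "norm (f x - Q x) < \<epsilon>" if x: "x \<in> X" for x
    proof -
      have "f x - Q x = (1/2) *\<^sub>R ((f x - P x) - (f (- x) - P (- x)))"
        using odd[OF x] by (simp add: Q_def algebra_simps flip: scaleR_2)
      also have "norm \<dots> \<le> (1/2) * (norm (f x - P x) + norm (f (- x) - P (- x)))"
        by (simp add: norm_triangle_ineq4)
      also have "\<dots> < \<epsilon>"
        using Pf[OF x] Pf[OF X[OF x]] by simp
      finally show ?thesis .
    qed
  qed
qed

lemma odd_sphere_map_smooth_approximation:
  fixes f :: "'a::euclidean_space \<Rightarrow> 'a"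
  assumes T: "subspace T" and cf: "continuous_on (sphere 0 1 \<inter> T) f"
    and fim: "f ` (sphere 0 1 \<inter> T) \<subseteq> sphere 0 1 \<inter> T"
    and odd: "\<And>x. x \<in> sphere 0 1 \<inter> T \<Longrightarrow> f (- x) = - f x"
  obtains g where "g differentiable_on sphere 0 1 \<inter> T" "g ` (sphere 0 1 \<inter> T) \<subseteq> sphere 0 1 \<inter> T"
    "\<And>x. g (- x) = - g x" "\<And>x. x \<in> sphere 0 1 \<inter> T \<Longrightarrow> f x \<noteq> - g x"
proof -
  let ?X = "sphere 0 1 \<inter> T"
  \<comment> \<open>Distance less than 1 from the unit vector f x suffices: it keeps Q x in the open
    half-space \<open>f x \<bullet> _ > 0\<close>, so \<open>sgn (Q x)\<close> is defined and never antipodal to f x.\<close>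
  obtain Q where Q: "polynomial_function Q" "Q ` ?X \<subseteq> T" "\<And>x. Q (- x) = - Q x"
    and Qf: "\<And>x. x \<in> ?X \<Longrightarrow> norm (f x - Q x) < 1"
    by (rule odd_polynomial_approximation[of ?X f T 1])
      (use assms in \<open>auto simp: compact_Int_closed closed_subspace subspace_neg\<close>)
  have Q_pos: "0 < f x \<bullet> Q x" if x: "x \<in> ?X" for x
  proof -
    have "norm (f x) = 1" using fim x by force
    moreover have "f x \<bullet> (f x - Q x) \<le> norm (f x) * norm (f x - Q x)"
      by (rule norm_cauchy_schwarz)
    ultimately show ?thesis
      using Qf[OF x] by (simp add: inner_diff_right dot_square_norm)
  qed
  then have Q_nz: "Q x \<noteq> 0" if "x \<in> ?X" for x
    using that by fastforce
  define g where "g x = sgn (Q x)" for x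
  show ?thesis
  proof
    have dQ: "Q differentiable_on ?X"
      using Q(1) differentiable_on_polynomial_function differentiable_on_subset by blast
    then show "g differentiable_on ?X"
      unfolding g_def sgn_div_norm using Q_nz
      by (fastforce intro: derivative_intros dQ differentiable_on_compose[OF dQ])
    show "g ` ?X \<subseteq> ?X"
    proof (rule image_subsetI)
      fix x assume "x \<in> ?X"
      then show "g x \<in> ?X"
        unfolding g_def using Q(2) Q_nz by (intro sgn_in_sphere_Int_subspace[OF T]) auto
    qed
    show "g (- x) = - g x" for x
      by (simp add: g_def Q(3) sgn_minus)
    show "f x \<noteq> - g x" if x: "x \<in> ?X" for x
    proof
      assume "f x = - g x"
      then have "f x \<bullet> Q x = - norm (Q x)"
        by (simp add: g_def sgn_div_norm dot_square_norm power2_eq_square divide_simps)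
      then show False using Q_pos[OF x] by simp
    qed
  qed
qed

lemma abs_inner_less_one:
  fixes u e :: "'a::real_inner"
  assumes "norm u = 1" "norm e = 1" "u \<noteq> e" "u \<noteq> - e"
  shows "\<bar>u \<bullet> e\<bar> < 1"
proof -
  have "\<bar>u \<bullet> e\<bar> \<noteq> norm u * norm e"
    by (subst norm_cauchy_schwarz_abs_eq) (use assms in auto)
  then show ?thesis
    using Cauchy_Schwarz_ineq2[of u e] assms(1,2) by simp
qed

lemma compact_obtain_bound_less_one:
  fixes \<phi> :: "'a::topological_space \<Rightarrow> real"
  assumes "compact K" "continuous_on K \<phi>" "\<And>x. x \<in> K \<Longrightarrow> \<phi> x < 1"
  obtains a where "0 \<le> a" "a < 1" "\<And>x. x \<in> K \<Longrightarrow> \<phi> x \<le> a"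
proof (cases "K = {}")
  case False
  then obtain x0 where "x0 \<in> K" "\<And>x. x \<in> K \<Longrightarrow> \<phi> x \<le> \<phi> x0"
    using continuous_attains_sup[OF assms(1) _ assms(2)] by blast
  then show ?thesis
    using that[of "max 0 (\<phi> x0)"] assms(3) by fastforce
qed (use that[of 0] in auto)

definition hyperplane_reflection :: "'a::real_inner \<Rightarrow> 'a \<Rightarrow> 'a" where
  "hyperplane_reflection v x = x - (2 * (x \<bullet> v) / (v \<bullet> v)) *\<^sub>R v"

lemma hyperplane_reflection_inner: "v \<noteq> 0 \<Longrightarrow> hyperplane_reflection v x \<bullet> v = - (x \<bullet> v)"
  by (simp add: hyperplane_reflection_def inner_diff_left)

lemma norm_hyperplane_reflection [simp]: "norm (hyperplane_reflection v x) = norm x"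
proof (cases "v = 0")
  case False
  then have "hyperplane_reflection v x \<bullet> hyperplane_reflection v x = x \<bullet> x"
    by (simp add: hyperplane_reflection_def inner_diff_left inner_diff_right inner_commute
        power2_eq_square field_simps)
  then show ?thesis by (simp add: norm_eq_sqrt_inner)
qed (simp add: hyperplane_reflection_def)

lemma hyperplane_reflection_involutive [simp]:
  "hyperplane_reflection v (hyperplane_reflection v x) = x"
proof (cases "v = 0")
  case False
  then show ?thesis
    using hyperplane_reflection_inner[OF False, of x]
    by (simp add: hyperplane_reflection_def[of v "hyperplane_reflection v x"])
      (simp add: hyperplane_reflection_def)
qed (simp add: hyperplane_reflection_def)

lemma hyperplane_reflection_minus: "hyperplane_reflection v (- x) = - hyperplane_reflection v x"
  by (simp add: hyperplane_reflection_def algebra_simps)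

lemma hyperplane_reflection_swap:
  assumes "norm q = norm e"
  shows "hyperplane_reflection (q - e) e = q"
proof (cases "q = e")
  case False
  have "q \<bullet> q = e \<bullet> e"
    using assms by (metis dot_square_norm)
  then have "(q - e) \<bullet> (q - e) = - 2 * (e \<bullet> (q - e))"
    by (simp add: inner_diff_left inner_diff_right inner_commute)
  moreover have "(q - e) \<bullet> (q - e) \<noteq> 0" using False by simp
  ultimately have "2 * (e \<bullet> (q - e)) / ((q - e) \<bullet> (q - e)) = -1"
    by (simp add: field_simps)
  then show ?thesis by (simp add: hyperplane_reflection_def)
qed (simp add: hyperplane_reflection_def)

lemma hyperplane_reflection_in_subspace:
  "subspace T \<Longrightarrow> v \<in> T \<Longrightarrow> x \<in> T \<Longrightarrow> hyperplane_reflection v x \<in> T"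
  unfolding hyperplane_reflection_def by (intro subspace_diff subspace_mul)

lemma continuous_on_hyperplane_reflection: "continuous_on X (hyperplane_reflection v)"
proof (cases "v = 0")
  case False
  then show ?thesis unfolding hyperplane_reflection_def by (intro continuous_intros) auto
qed (simp add: hyperplane_reflection_def continuous_on_id)

text \<open>Clamp the e-component of y to \<open>[-a, a]\<close> and renormalise: this flattens the band
  \<open>\<bar>y \<bullet> e\<bar> \<le> a\<close> of the unit sphere onto the equator orthogonal to e.\<close>
definition equator_push :: "real \<Rightarrow> 'a::real_inner \<Rightarrow> 'a \<Rightarrow> 'a" where
  "equator_push a e y = sgn (y - max (- a) (min a (y \<bullet> e)) *\<^sub>R e)"

lemma push_toward_equator_inner_pos:
  fixes e y :: "'a::real_inner"
  assumes "0 \<le> a" "a < 1" "norm e = 1" "norm y = 1"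
  shows "0 < (y - max (- a) (min a (y \<bullet> e)) *\<^sub>R e) \<bullet> y"
proof -
  let ?c = "max (- a) (min a (y \<bullet> e))"
  have "\<bar>y \<bullet> e\<bar> \<le> 1"
    using Cauchy_Schwarz_ineq2[of y e] assms by simp
  moreover have "\<bar>?c\<bar> \<le> a"
    using assms(1) by auto
  ultimately have "\<bar>?c * (y \<bullet> e)\<bar> \<le> a"
    using mult_mono[of "\<bar>?c\<bar>" a "\<bar>y \<bullet> e\<bar>" 1] assms(1) by (simp add: abs_mult)
  then have "?c * (y \<bullet> e) \<le> a"
    by linarith
  moreover have "(y - ?c *\<^sub>R e) \<bullet> y = y \<bullet> y - ?c * (y \<bullet> e)"
    by (simp add: inner_diff_left inner_commute[of e y])
  ultimately show ?thesis
    using assms by (simp add: dot_square_norm)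
qed

lemma
  fixes e y :: "'a::real_inner"
  assumes "0 \<le> a" "a < 1" "norm e = 1" "norm y = 1"
  shows norm_equator_push: "norm (equator_push a e y) = 1"
    and equator_push_inner_pos: "0 < equator_push a e y \<bullet> y"
proof -
  let ?z = "y - max (- a) (min a (y \<bullet> e)) *\<^sub>R e"
  have "0 < ?z \<bullet> y"
    by (rule push_toward_equator_inner_pos[OF assms])
  then have "?z \<noteq> 0" by auto
  then show "norm (equator_push a e y) = 1"
    by (simp add: equator_push_def norm_sgn)
  show "0 < equator_push a e y \<bullet> y"
    using \<open>0 < ?z \<bullet> y\<close> \<open>?z \<noteq> 0\<close> by (simp add: equator_push_def sgn_div_norm)
qed

lemma equator_push_minus:
  assumes "0 \<le> a"
  shows "equator_push a e (- y) = - equator_push a e y"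
proof -
  have "max (- a) (min a (- t)) = - max (- a) (min a t)" for t :: real
    using assms by linarith
  then have eq: "- y - max (- a) (min a ((- y) \<bullet> e)) *\<^sub>R e
      = - (y - max (- a) (min a (y \<bullet> e)) *\<^sub>R e)"
    by (simp add: algebra_simps)
  show ?thesis
    unfolding equator_push_def eq by (rule sgn_minus)
qed

lemma equator_push_orthogonal:
  assumes "\<bar>y \<bullet> e\<bar> \<le> a" "norm e = 1"
  shows "equator_push a e y \<bullet> e = 0"
proof -
  have "max (- a) (min a (y \<bullet> e)) = y \<bullet> e"
    using assms(1) by auto
  then show ?thesis
    using assms(2) by (simp add: equator_push_def sgn_div_norm inner_diff_left dot_square_norm)
qed

lemma equator_push_in_subspace:
  "subspace T \<Longrightarrow> e \<in> T \<Longrightarrow> y \<in> T \<Longrightarrow> equator_push a e y \<in> T"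
  unfolding equator_push_def sgn_div_norm by (intro subspace_mul subspace_diff)

lemma continuous_on_equator_push:
  fixes e :: "'a::real_inner"
  assumes "0 \<le> a" "a < 1" "norm e = 1"
  shows "continuous_on (sphere 0 1) (equator_push a e)"
proof -
  have "y - max (- a) (min a (y \<bullet> e)) *\<^sub>R e \<noteq> 0" if "y \<in> sphere 0 1" for y
    using push_toward_equator_inner_pos[OF assms, of y] that by auto
  then show ?thesis
    unfolding equator_push_def by (intro continuous_intros) auto
qed

section \<open>Krasnoselskii genus\<close>

lemma odd_map_to_punctured_0: "odd_map_to_punctured X 0 \<longleftrightarrow> X = {}"
  by (auto simp: odd_map_to_punctured_def)

lemma odd_map_to_punctured_pullback:
  fixes \<phi> :: "'a::real_normed_vector \<Rightarrow> 'b::real_normed_vector"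
  assumes "continuous_on X \<phi>" "\<phi> ` X \<subseteq> Y" "\<And>x. x \<in> X \<Longrightarrow> \<phi> (- x) = - \<phi> x"
    and "odd_map_to_punctured Y k"
  shows "odd_map_to_punctured X k"
proof -
  obtain g :: "nat \<Rightarrow> 'b \<Rightarrow> real"
    where g: "\<forall>l<k. continuous_on Y (g l) \<and> (\<forall>y\<in>Y. g l (- y) = - g l y)"
      "\<forall>y\<in>Y. \<exists>l<k. g l y \<noteq> 0"
    using assms(4) unfolding odd_map_to_punctured_def by blast
  have "continuous_on X (g l \<circ> \<phi>)" if "l < k" for l
    unfolding o_def by (rule continuous_on_compose2[OF _ assms(1,2)]) (use g(1) that in auto)
  moreover have "(g l \<circ> \<phi>) (- x) = - (g l \<circ> \<phi>) x" if "l < k" "x \<in> X" for l x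
    using g(1) that assms(2,3) by auto
  moreover have "\<exists>l<k. (g l \<circ> \<phi>) x \<noteq> 0" if "x \<in> X" for x
    using g(2) that assms(2) by auto
  ultimately show ?thesis
    unfolding odd_map_to_punctured_def by (intro exI[of _ "\<lambda>l. g l \<circ> \<phi>"]) blast
qed

lemma enat_le_kras_genus:
  "(\<And>k. odd_map_to_punctured X k \<Longrightarrow> n \<le> k) \<Longrightarrow> enat n \<le> kras_genus X"
  unfolding kras_genus_def by (auto intro: LeastI2_ex)

lemma nonempty_if_kras_genus_ge:
  assumes "enat k \<le> kras_genus X" "0 < k"
  shows "X \<noteq> {}"
proof
  assume "X = {}"
  then have "odd_map_to_punctured X 0"
    by (simp add: odd_map_to_punctured_0)
  then have "kras_genus X = 0"
    unfolding kras_genus_def by (auto simp: zero_enat_def intro!: Least_eq_0)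
  then show False
    using assms by (simp add: zero_enat_def)
qed

section \<open>The Borsuk--Ulam theorem\<close>

text \<open>An enumeration b of the standard basis gives the flag of subspaces
  \<open>flag_subspace m = span {b 0, \<dots>, b m}\<close>; the coordinates with respect to b identify
  the unit sphere of \<open>flag_subspace m\<close> with the library's \<open>nsphere m\<close>, which transfers the
  Brouwer degree to self-maps of these spheres.\<close>
locale ordered_basis =
  fixes b :: "nat \<Rightarrow> 'a::euclidean_space"
  assumes bij_betw_Basis: "bij_betw b {..<DIM('a)} Basis"
begin

definition coords :: "'a \<Rightarrow> nat \<Rightarrow> real" where
  "coords x i = (if i < DIM('a) then x \<bullet> b i else 0)"

definition of_coords :: "(nat \<Rightarrow> real) \<Rightarrow> 'a" where
  "of_coords y = (\<Sum>i<DIM('a). y i *\<^sub>R b i)"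

definition flag_subspace :: "nat \<Rightarrow> 'a set" where
  "flag_subspace m = {x. \<forall>i<DIM('a). m < i \<longrightarrow> x \<bullet> b i = 0}"

definition flag_sphere :: "nat \<Rightarrow> 'a set" where
  "flag_sphere m = sphere 0 1 \<inter> flag_subspace m"

definition flag_degree :: "nat \<Rightarrow> ('a \<Rightarrow> 'a) \<Rightarrow> int" where
  "flag_degree m f = Brouwer_degree2 m (coords \<circ> f \<circ> of_coords)"

definition odd_self_map :: "nat \<Rightarrow> ('a \<Rightarrow> 'a) \<Rightarrow> bool" where
  "odd_self_map m f \<longleftrightarrow> continuous_on (flag_sphere m) f \<and> f ` flag_sphere m \<subseteq> flag_sphere m
     \<and> (\<forall>x\<in>flag_sphere m. f (- x) = - f x)"

lemma basis_vector: "i < DIM('a) \<Longrightarrow> b i \<in> Basis"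
  using bij_betw_Basis bij_betwE by blast

lemma inner_basis_vectors:
  "i < DIM('a) \<Longrightarrow> j < DIM('a) \<Longrightarrow> b i \<bullet> b j = (if i = j then 1 else 0)"
  using bij_betw_Basis
  by (simp add: inner_Basis basis_vector bij_betw_def inj_on_def)

lemma norm_basis_vector: "i < DIM('a) \<Longrightarrow> norm (b i) = 1"
  by (simp add: basis_vector)

lemma sum_Basis_eq: "(\<Sum>u\<in>Basis. g u) = (\<Sum>i<DIM('a). g (b i))"
  using sum.reindex_bij_betw[OF bij_betw_Basis, of g] by simp

lemma euclidean_representation_ordered: "(\<Sum>i<DIM('a). (x \<bullet> b i) *\<^sub>R b i) = x"
  using euclidean_representation[of x] sum_Basis_eq[of "\<lambda>u. (x \<bullet> u) *\<^sub>R u"] by simp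

lemma of_coords_coords [simp]: "of_coords (coords x) = x"
  unfolding of_coords_def coords_def using euclidean_representation_ordered[of x] by simp

lemma inner_of_coords:
  assumes "j < DIM('a)"
  shows "of_coords y \<bullet> b j = y j"
proof -
  have "of_coords y \<bullet> b j = (\<Sum>i<DIM('a). if i = j then y j else 0)"
    unfolding of_coords_def inner_sum_left
    by (rule sum.cong) (auto simp: inner_basis_vectors assms)
  then show ?thesis
    using assms by simp
qed

lemma norm_power2_eq_sum_coords: "(norm x)\<^sup>2 = (\<Sum>i<DIM('a). (x \<bullet> b i)\<^sup>2)"
proof -
  have "(norm x)\<^sup>2 = (\<Sum>u\<in>Basis. (x \<bullet> u) * (x \<bullet> u))"
    by (simp only: power2_norm_eq_inner euclidean_inner[of x x])
  also have "\<dots> = (\<Sum>i<DIM('a). (x \<bullet> b i)\<^sup>2)"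
    by (simp add: sum_Basis_eq power2_eq_square)
  finally show ?thesis .
qed

lemma coords_minus: "coords (- x) = (\<lambda>i. - coords x i)"
  by (auto simp: coords_def)

lemma of_coords_minus: "of_coords (\<lambda>i. - y i) = - of_coords y"
  by (simp add: of_coords_def sum_negf)

lemma subspace_flag_subspace: "subspace (flag_subspace m)"
  unfolding flag_subspace_def subspace_def by (auto simp: inner_add_left)

lemma dim_flag_subspace:
  assumes m: "m < DIM('a)"
  shows "dim (flag_subspace m) = Suc m"
proof -
  have inj: "inj_on b {..<DIM('a)}" and onto: "b ` {..<DIM('a)} = Basis"
    using bij_betw_Basis unfolding bij_betw_def by blast+
  have sub: "b ` {..m} \<subseteq> Basis"
    using m basis_vector by auto
  have "{..m} \<subseteq> {..<DIM('a)}"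
    using m by auto
  then have "Basis - b ` {..m} = b ` ({..<DIM('a)} - {..m})"
    using inj_on_image_set_diff[OF inj Diff_subset] onto by simp
  then have "flag_subspace m = {x. \<forall>u\<in>Basis - b ` {..m}. x \<bullet> u = 0}"
    by (auto simp: flag_subspace_def not_le)
  also have "\<dots> = {x. \<forall>u\<in>Basis. u \<notin> b ` {..m} \<longrightarrow> x \<bullet> u = 0}"
    by blast
  finally have "dim (flag_subspace m) = card (b ` {..m})"
    using dim_substandard[OF sub] by argo
  also have "\<dots> = Suc m"
    using m by (subst card_image) (auto intro: inj_on_subset[OF inj])
  finally show ?thesis .
qed

lemma flag_subspace_mono: "m \<le> m' \<Longrightarrow> flag_subspace m \<subseteq> flag_subspace m'"
  unfolding flag_subspace_def by auto

lemma flag_sphere_mono: "m \<le> m' \<Longrightarrow> flag_sphere m \<subseteq> flag_sphere m'"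
  unfolding flag_sphere_def using flag_subspace_mono by auto

lemma flag_subspace_SucD:
  "x \<in> flag_subspace (Suc k) \<Longrightarrow> x \<bullet> b (Suc k) = 0 \<Longrightarrow> x \<in> flag_subspace k"
  unfolding flag_subspace_def by (auto simp: Suc_le_eq dest: Suc_lessI)

lemma flag_sphere_minus: "x \<in> flag_sphere m \<Longrightarrow> - x \<in> flag_sphere m"
  by (auto simp: flag_sphere_def flag_subspace_def)

lemma compact_flag_sphere: "compact (flag_sphere m)"
  unfolding flag_sphere_def
  by (simp add: closed_subspace compact_Int_closed subspace_flag_subspace)

lemma basis_vector_in_flag_sphere: "i \<le> m \<Longrightarrow> m < DIM('a) \<Longrightarrow> b i \<in> flag_sphere m"
  by (auto simp: flag_sphere_def flag_subspace_def norm_basis_vector inner_basis_vectors)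

lemma basis_vector_notin_flag_sphere: "m < DIM('a) \<Longrightarrow> k < m \<Longrightarrow> b m \<notin> flag_sphere k"
  by (auto simp: flag_sphere_def flag_subspace_def inner_basis_vectors)

lemma flag_sphere_0:
  assumes x: "x \<in> flag_sphere 0"
  shows "x = b 0 \<or> x = - b 0"
proof -
  have "x = (\<Sum>i<DIM('a). (x \<bullet> b i) *\<^sub>R b i)"
    by (rule euclidean_representation_ordered[symmetric])
  also have "\<dots> = (\<Sum>i\<in>{0}. (x \<bullet> b i) *\<^sub>R b i)"
    using x by (intro sum.mono_neutral_right) (auto simp: flag_sphere_def flag_subspace_def)
  finally have x0: "x = (x \<bullet> b 0) *\<^sub>R b 0"
    by simp
  moreover have "norm ((x \<bullet> b 0) *\<^sub>R b 0) = \<bar>x \<bullet> b 0\<bar>"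
    by (simp add: norm_basis_vector)
  ultimately have "\<bar>x \<bullet> b 0\<bar> = 1"
    using x by (simp add: flag_sphere_def)
  then show ?thesis
    using x0 by (auto simp: abs_if split: if_splits)
qed

lemma coords_in_nsphere:
  assumes "m < DIM('a)" "x \<in> flag_sphere m"
  shows "coords x \<in> topspace (nsphere m)"
proof -
  have "(\<Sum>i<DIM('a). (x \<bullet> b i)\<^sup>2) = (\<Sum>i\<le>m. (x \<bullet> b i)\<^sup>2)"
    using assms by (intro sum.mono_neutral_right) (auto simp: flag_sphere_def flag_subspace_def)
  then have "(\<Sum>i\<le>m. (coords x i)\<^sup>2) = 1"
    using assms by (simp add: coords_def flag_sphere_def flip: norm_power2_eq_sum_coords)
  then show ?thesis
    using assms by (auto simp: nsphere coords_def flag_sphere_def flag_subspace_def)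
qed

lemma
  assumes "m < DIM('a)" "y \<in> topspace (nsphere m)"
  shows of_coords_in_flag_sphere: "of_coords y \<in> flag_sphere m"
    and coords_of_coords: "coords (of_coords y) = y"
proof -
  have y1: "(\<Sum>i\<le>m. (y i)\<^sup>2) = 1" and y0: "\<And>i. m < i \<Longrightarrow> y i = 0"
    using assms(2) by (auto simp: nsphere)
  have "(norm (of_coords y))\<^sup>2 = (\<Sum>i\<le>m. (y i)\<^sup>2)"
    using assms(1) y0
    by (simp add: norm_power2_eq_sum_coords inner_of_coords) (intro sum.mono_neutral_right; auto)
  then have "norm (of_coords y) = 1"
    using y1 norm_ge_zero[of "of_coords y"] by (simp add: power2_eq_1_iff)
  then show "of_coords y \<in> flag_sphere m"
    using y0 by (auto simp: flag_sphere_def flag_subspace_def inner_of_coords)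
  show "coords (of_coords y) = y"
    using assms(1) y0 by (auto simp: coords_def inner_of_coords fun_eq_iff)
qed

lemma continuous_map_coords:
  assumes "m < DIM('a)"
  shows "continuous_map (top_of_set (flag_sphere m)) (nsphere m) coords"
proof -
  have "continuous_map (top_of_set (flag_sphere m)) euclideanreal (\<lambda>x. coords x i)" for i
    unfolding coords_def continuous_map_iff_continuous
    by (cases "i < DIM('a)") (simp_all add: continuous_on_inner continuous_on_id)
  then have "continuous_map (top_of_set (flag_sphere m)) (powertop_real UNIV) coords"
    by (simp add: continuous_map_componentwise_UNIV)
  then show ?thesis
    unfolding nsphere continuous_map_in_subtopology
    using coords_in_nsphere[OF assms] by (auto simp: nsphere)
qed

lemma continuous_map_of_coords:
  assumes "m < DIM('a)"
  shows "continuous_map (nsphere m) (top_of_set (flag_sphere m)) of_coords"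
proof -
  have "continuous_map euclidean (top_of_set (span (b ` {..<DIM('a)}))) of_coords"
    unfolding of_coords_def by (rule continuous_map_span_sum) auto
  then have "continuous_map (nsphere m) euclidean of_coords"
    unfolding nsphere euclidean_product_topology[symmetric]
    using continuous_map_from_subtopology continuous_map_in_subtopology by blast
  then show ?thesis
    using of_coords_in_flag_sphere[OF assms] by (auto simp: continuous_map_in_subtopology)
qed

lemma continuous_map_flag_conjugate:
  assumes m: "m < DIM('a)"
    and "continuous_on (flag_sphere m) f" "f ` flag_sphere m \<subseteq> flag_sphere m"
  shows "continuous_map (nsphere m) (nsphere m) (coords \<circ> f \<circ> of_coords)"
proof -
  have "continuous_map (top_of_set (flag_sphere m)) (top_of_set (flag_sphere m)) f"
    using assms by (auto simp: continuous_map_subtopology_eu)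
  then show ?thesis
    using continuous_map_of_coords[OF m] continuous_map_coords[OF m]
    by (intro continuous_map_compose) auto
qed

lemma flag_degree_homotopic:
  assumes m: "m < DIM('a)"
    and "homotopic_with_canon (\<lambda>_. True) (flag_sphere m) (flag_sphere m) f g"
  shows "flag_degree m f = flag_degree m g"
proof -
  have "homotopic_with (\<lambda>_. True) (top_of_set (flag_sphere m)) (nsphere m)
      (coords \<circ> f) (coords \<circ> g)"
    by (rule homotopic_with_compose_continuous_map_left[OF assms(2) continuous_map_coords[OF m]])
      auto
  then have "homotopic_with (\<lambda>_. True) (nsphere m) (nsphere m)
      (coords \<circ> f \<circ> of_coords) (coords \<circ> g \<circ> of_coords)"
    by (rule homotopic_with_compose_continuous_map_right[OF _ continuous_map_of_coords[OF m]])
      auto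
  then show ?thesis
    unfolding flag_degree_def by (rule Brouwer_degree2_homotopic)
qed

lemma flag_degree_compose:
  assumes m: "m < DIM('a)"
    and "continuous_on (flag_sphere m) f" "f ` flag_sphere m \<subseteq> flag_sphere m"
    and "continuous_on (flag_sphere m) g" "g ` flag_sphere m \<subseteq> flag_sphere m"
  shows "flag_degree m (g \<circ> f) = flag_degree m g * flag_degree m f"
proof -
  have "coords \<circ> (g \<circ> f) \<circ> of_coords = (coords \<circ> g \<circ> of_coords) \<circ> (coords \<circ> f \<circ> of_coords)"
    by (simp add: fun_eq_iff)
  then show ?thesis
    unfolding flag_degree_def
    using Brouwer_degree2_compose continuous_map_flag_conjugate assms by metis
qed

lemma flag_degree_cong:
  "m < DIM('a) \<Longrightarrow> (\<And>x. x \<in> flag_sphere m \<Longrightarrow> f x = g x) \<Longrightarrow> flag_degree m f = flag_degree m g"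
  unfolding flag_degree_def by (auto intro!: Brouwer_degree2_eq simp: of_coords_in_flag_sphere)

lemma flag_degree_id: "m < DIM('a) \<Longrightarrow> flag_degree m id = 1"
  unfolding flag_degree_def
  by (subst Brouwer_degree2_eq[of m _ id]) (simp_all add: coords_of_coords)

lemma flag_degree_nonsurjective:
  assumes m: "m < DIM('a)"
    and f: "continuous_on (flag_sphere m) f" "f ` flag_sphere m \<subseteq> flag_sphere m"
    and q: "q \<in> flag_sphere m" "q \<notin> f ` flag_sphere m"
  shows "flag_degree m f = 0"
  unfolding flag_degree_def
proof (rule Brouwer_degree2_nonsurjective[OF continuous_map_flag_conjugate[OF m f]])
  have "coords q \<notin> (coords \<circ> f \<circ> of_coords) ` topspace (nsphere m)"
  proof
    assume "coords q \<in> (coords \<circ> f \<circ> of_coords) ` topspace (nsphere m)"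
    then obtain y where "y \<in> topspace (nsphere m)" "coords q = coords (f (of_coords y))"
      by auto
    then have "q = f (of_coords y)" "of_coords y \<in> flag_sphere m"
      using of_coords_in_flag_sphere[OF m] by (metis of_coords_coords)+
    then show False using q(2) by blast
  qed
  then show "(coords \<circ> f \<circ> of_coords) ` topspace (nsphere m) \<noteq> topspace (nsphere m)"
    using coords_in_nsphere[OF m q(1)] by blast
qed

lemma odd_self_map_restrict:
  "odd_self_map (Suc k) f \<Longrightarrow> f ` flag_sphere k \<subseteq> flag_sphere k \<Longrightarrow> odd_self_map k f"
  unfolding odd_self_map_def using flag_sphere_mono[of k "Suc k"]
  by (auto intro: continuous_on_subset)

lemma odd_self_map_compose:
  assumes "odd_self_map m f" "odd_self_map m g"
  shows "odd_self_map m (g \<circ> f)"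
proof -
  have cf: "continuous_on (flag_sphere m) f" "f ` flag_sphere m \<subseteq> flag_sphere m"
    and cg: "continuous_on (flag_sphere m) g"
    using assms by (auto simp: odd_self_map_def)
  have "continuous_on (flag_sphere m) (g \<circ> f)"
    by (rule continuous_on_compose[OF cf(1) continuous_on_subset[OF cg cf(2)]])
  then show ?thesis
    using assms by (auto simp: odd_self_map_def)
qed

lemma flag_degree_Suc_even_diff:
  assumes k: "Suc k < DIM('a)" and f: "odd_self_map (Suc k) f"
    and equator: "f ` flag_sphere k \<subseteq> flag_sphere k"
  shows "even (flag_degree (Suc k) f - flag_degree k f)"
proof -
  have cf: "continuous_on (flag_sphere (Suc k)) f" "f ` flag_sphere (Suc k) \<subseteq> flag_sphere (Suc k)"
    and odd: "\<And>x. x \<in> flag_sphere (Suc k) \<Longrightarrow> f (- x) = - f x"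
    using f by (auto simp: odd_self_map_def)
  have "even (Brouwer_degree2 (Suc k) (coords \<circ> f \<circ> of_coords)
             - Brouwer_degree2 (Suc k - Suc 0) (coords \<circ> f \<circ> of_coords))"
  proof (rule Borsuk_odd_mapping_degree_step[OF continuous_map_flag_conjugate[OF k cf]])
    fix y assume "y \<in> topspace (nsphere (Suc k))"
    then show "(coords \<circ> f \<circ> of_coords \<circ> (\<lambda>x i. - x i)) y
               = ((\<lambda>x i. - x i) \<circ> (coords \<circ> f \<circ> of_coords)) y"
      using odd of_coords_in_flag_sphere[OF k] by (simp add: of_coords_minus coords_minus)
  next
    have "k < DIM('a)" using k by simp
    then show "coords \<circ> f \<circ> of_coords
               \<in> topspace (nsphere (Suc k - Suc 0)) \<rightarrow> topspace (nsphere (Suc k - Suc 0))"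
      using equator of_coords_in_flag_sphere coords_in_nsphere by fastforce
  qed
  then show ?thesis
    by (simp add: flag_degree_def)
qed

lemma obtain_smooth_odd_self_map:
  assumes m: "m < DIM('a)" and f: "odd_self_map m f"
  obtains g where "odd_self_map m g" "g differentiable_on flag_sphere m"
    "flag_degree m g = flag_degree m f"
proof -
  have cf: "continuous_on (flag_sphere m) f" "f ` flag_sphere m \<subseteq> flag_sphere m"
    and odd: "\<And>x. x \<in> flag_sphere m \<Longrightarrow> f (- x) = - f x"
    using f by (auto simp: odd_self_map_def)
  obtain g where dg: "g differentiable_on flag_sphere m"
    and gim: "g ` flag_sphere m \<subseteq> flag_sphere m"
    and godd: "\<And>x. g (- x) = - g x"
    and nonantipodal: "\<And>x. x \<in> flag_sphere m \<Longrightarrow> f x \<noteq> - g x"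
    using odd_sphere_map_smooth_approximation[OF subspace_flag_subspace] cf odd
    unfolding flag_sphere_def by blast
  have cg: "continuous_on (flag_sphere m) g"
    by (rule differentiable_imp_continuous_on[OF dg])
  have "homotopic_with_canon (\<lambda>_. True) (flag_sphere m) (flag_sphere m) g f"
    using nonantipodal_maps_homotopic[OF subspace_flag_subspace cg cf(1)] gim cf(2) nonantipodal
    unfolding flag_sphere_def by (metis minus_minus)
  then show ?thesis
    using that[of g] dg cg gim godd flag_degree_homotopic[OF m] by (simp add: odd_self_map_def)
qed

lemma odd_self_map_hyperplane_reflection:
  "v \<in> flag_subspace m \<Longrightarrow> odd_self_map m (hyperplane_reflection v)"
  unfolding odd_self_map_def flag_sphere_def
  by (auto simp: continuous_on_hyperplane_reflection hyperplane_reflection_minus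
      intro: hyperplane_reflection_in_subspace[OF subspace_flag_subspace])

lemma
  assumes m: "m < DIM('a)" and h: "odd_self_map m h"
    and a: "0 \<le> a" "a < 1" and e: "e \<in> flag_sphere m"
  shows odd_self_map_equator_push: "odd_self_map m (equator_push a e \<circ> h)"
    and flag_degree_equator_push: "flag_degree m (equator_push a e \<circ> h) = flag_degree m h"
proof -
  let ?G = "equator_push a e \<circ> h"
  have ch: "continuous_on (flag_sphere m) h" and him: "h ` flag_sphere m \<subseteq> flag_sphere m"
    and odd: "\<And>x. x \<in> flag_sphere m \<Longrightarrow> h (- x) = - h x"
    using h by (auto simp: odd_self_map_def)
  have e1: "norm e = 1"
    using e by (simp add: flag_sphere_def)
  have h_unit: "norm (h x) = 1" if "x \<in> flag_sphere m" for x
    using him that unfolding flag_sphere_def by force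
  have G_sphere: "?G ` flag_sphere m \<subseteq> flag_sphere m"
    using h_unit him e a
    by (force simp: flag_sphere_def norm_equator_push
        intro!: equator_push_in_subspace[OF subspace_flag_subspace])
  have cG: "continuous_on (flag_sphere m) ?G"
    by (rule continuous_on_compose[OF ch
          continuous_on_subset[OF continuous_on_equator_push[OF a e1]]])
      (use h_unit in auto)
  then show "odd_self_map m ?G"
    using G_sphere odd by (simp add: odd_self_map_def equator_push_minus[OF a(1)])
  have "homotopic_with_canon (\<lambda>_. True) (flag_sphere m) (sphere 0 1 \<inter> flag_subspace m) ?G h"
  proof (rule nonantipodal_maps_homotopic[OF subspace_flag_subspace cG ch])
    fix x assume x: "x \<in> flag_sphere m"
    have pos: "0 < ?G x \<bullet> h x"
      using equator_push_inner_pos[OF a e1 h_unit[OF x]] by simp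
    show "?G x \<noteq> - h x"
    proof
      assume "?G x = - h x"
      then have "?G x \<bullet> h x = - (h x \<bullet> h x)"
        by simp
      then show False
        using pos inner_ge_zero[of "h x"] by linarith
    qed
  qed (use G_sphere him in \<open>auto simp: flag_sphere_def\<close>)
  then show "flag_degree m ?G = flag_degree m h"
    unfolding flag_sphere_def[symmetric] by (rule flag_degree_homotopic[OF m])
qed

lemma obtain_pole_avoiding_odd_self_map:
  assumes k: "Suc k < DIM('a)" and f: "odd_self_map (Suc k) f"
  obtains h where "odd_self_map (Suc k) h" "\<And>x. x \<in> flag_sphere k \<Longrightarrow> h x \<noteq> b (Suc k)"
    "odd (flag_degree (Suc k) h) \<Longrightarrow> odd (flag_degree (Suc k) f)"
proof -
  let ?e = "b (Suc k)"
  have sub: "flag_sphere k \<subseteq> flag_sphere (Suc k)"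
    by (simp add: flag_sphere_mono)
  obtain g where g: "odd_self_map (Suc k) g" and dg: "g differentiable_on flag_sphere (Suc k)"
    and deg_g: "flag_degree (Suc k) g = flag_degree (Suc k) f"
    using obtain_smooth_odd_self_map[OF k f] by blast
  \<comment> \<open>Sard: a smooth map from the lower-dimensional equator is not onto.\<close>
  have "g ` flag_sphere k \<noteq> flag_sphere (Suc k)"
    using spheremap_lemma1[OF subspace_flag_subspace subspace_flag_subspace _
        flag_subspace_mono[of k "Suc k"]] differentiable_on_subset[OF dg sub] k
    unfolding flag_sphere_def by (simp add: dim_flag_subspace)
  then obtain q where q: "q \<in> flag_sphere (Suc k)" "q \<notin> g ` flag_sphere k"
    using g sub by (auto simp: odd_self_map_def)
  have e: "?e \<in> flag_sphere (Suc k)"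
    using k by (simp add: basis_vector_in_flag_sphere)
  define R where "R = hyperplane_reflection (q - ?e)"
  have R: "odd_self_map (Suc k) R"
    unfolding R_def using q(1) e
    by (intro odd_self_map_hyperplane_reflection subspace_diff[OF subspace_flag_subspace])
      (auto simp: flag_sphere_def)
  have Re: "R ?e = q"
    using q(1) e by (simp add: R_def hyperplane_reflection_swap flag_sphere_def)
  show ?thesis
  proof
    show "odd_self_map (Suc k) (R \<circ> g)"
      by (rule odd_self_map_compose[OF g R])
    show "(R \<circ> g) x \<noteq> ?e" if "x \<in> flag_sphere k" for x
    proof
      assume "(R \<circ> g) x = ?e"
      then have "g x = q"
        using Re by (metis R_def comp_apply hyperplane_reflection_involutive)
      then show False using q(2) that by blast
    qed
    assume "odd (flag_degree (Suc k) (R \<circ> g))"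
    then show "odd (flag_degree (Suc k) f)"
      using flag_degree_compose[OF k] g R deg_g by (simp add: odd_self_map_def)
  qed
qed

lemma obtain_equator_preserving_odd_self_map:
  assumes k: "Suc k < DIM('a)" and h: "odd_self_map (Suc k) h"
    and avoid: "\<And>x. x \<in> flag_sphere k \<Longrightarrow> h x \<noteq> b (Suc k)"
  obtains G where "odd_self_map (Suc k) G" "G ` flag_sphere k \<subseteq> flag_sphere k"
    "flag_degree (Suc k) G = flag_degree (Suc k) h"
proof -
  let ?e = "b (Suc k)"
  have e: "?e \<in> flag_sphere (Suc k)"
    using k by (simp add: basis_vector_in_flag_sphere)
  have sub: "flag_sphere k \<subseteq> flag_sphere (Suc k)"
    by (simp add: flag_sphere_mono)
  have h_unit: "norm (h x) = 1" and h_odd: "h (- x) = - h x" if "x \<in> flag_sphere (Suc k)" for x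
    using h that unfolding odd_self_map_def flag_sphere_def by force+
  \<comment> \<open>Being odd, h misses both poles \<open>\<pm>e\<close> on the equator.\<close>
  have "\<bar>h x \<bullet> ?e\<bar> < 1" if x: "x \<in> flag_sphere k" for x
    using avoid[OF x] avoid[OF flag_sphere_minus[OF x]] h_odd[of x] h_unit[of x] x sub e
    by (intro abs_inner_less_one) (auto simp: flag_sphere_def)
  moreover have "continuous_on (flag_sphere k) (\<lambda>x. \<bar>h x \<bullet> ?e\<bar>)"
    using h continuous_on_subset[OF _ sub]
    by (auto simp: odd_self_map_def intro!: continuous_intros)
  ultimately obtain a where a: "0 \<le> a" "a < 1" and bound: "\<And>x. x \<in> flag_sphere k \<Longrightarrow> \<bar>h x \<bullet> ?e\<bar> \<le> a"
    using compact_obtain_bound_less_one[OF compact_flag_sphere] by metis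
  show ?thesis
  proof
    show "odd_self_map (Suc k) (equator_push a ?e \<circ> h)"
      by (rule odd_self_map_equator_push[OF k h a e])
    show "flag_degree (Suc k) (equator_push a ?e \<circ> h) = flag_degree (Suc k) h"
      by (rule flag_degree_equator_push[OF k h a e])
    show "(equator_push a ?e \<circ> h) ` flag_sphere k \<subseteq> flag_sphere k"
    proof (rule image_subsetI)
      fix x assume x: "x \<in> flag_sphere k"
      have "equator_push a ?e (h x) \<bullet> ?e = 0"
        using bound[OF x] e by (simp add: equator_push_orthogonal flag_sphere_def)
      moreover have "equator_push a ?e (h x) \<in> flag_sphere (Suc k)"
        using odd_self_map_equator_push[OF k h a e] x sub by (auto simp: odd_self_map_def)
      ultimately show "(equator_push a ?e \<circ> h) x \<in> flag_sphere k"
        by (simp add: flag_sphere_def flag_subspace_SucD)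
    qed
  qed
qed

lemma odd_flag_degree_odd_self_map:
  "m < DIM('a) \<Longrightarrow> odd_self_map m f \<Longrightarrow> odd (flag_degree m f)"
proof (induction m arbitrary: f)
  case 0
  have "b 0 \<in> flag_sphere 0"
    using basis_vector_in_flag_sphere[of 0 0] by simp
  then have "f (b 0) = b 0 \<or> f (b 0) = - b 0" "f (- b 0) = - f (b 0)"
    using flag_sphere_0 "0.prems"(2) by (auto simp: odd_self_map_def)
  then have "(f \<circ> f) x = id x" if "x \<in> flag_sphere 0" for x
    using flag_sphere_0[OF that] by auto
  then have "flag_degree 0 f * flag_degree 0 f = 1"
    using flag_degree_cong[of 0 "f \<circ> f" id] flag_degree_id[of 0]
      flag_degree_compose[of 0 f f] "0.prems" by (simp add: odd_self_map_def)
  then show ?case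
    by (metis even_mult_iff odd_one)
next
  case (Suc k)
  obtain h where h: "odd_self_map (Suc k) h" "\<And>x. x \<in> flag_sphere k \<Longrightarrow> h x \<noteq> b (Suc k)"
    and deg_h: "odd (flag_degree (Suc k) h) \<Longrightarrow> odd (flag_degree (Suc k) f)"
    using obtain_pole_avoiding_odd_self_map[OF Suc.prems] by blast
  obtain G where G: "odd_self_map (Suc k) G" and G_equator: "G ` flag_sphere k \<subseteq> flag_sphere k"
    and deg_G: "flag_degree (Suc k) G = flag_degree (Suc k) h"
    using obtain_equator_preserving_odd_self_map[OF Suc.prems(1) h] by blast
  have "odd (flag_degree k G)"
    using Suc.prems(1) odd_self_map_restrict[OF G G_equator] by (intro Suc.IH) auto
  moreover have "even (flag_degree (Suc k) G - flag_degree k G)"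
    by (rule flag_degree_Suc_even_diff[OF Suc.prems(1) G G_equator])
  ultimately show ?case
    using deg_G deg_h by simp
qed

theorem borsuk_ulam_flag_sphere:
  assumes k: "Suc k < DIM('a)"
    and f: "continuous_on (flag_sphere (Suc k)) f" "f ` flag_sphere (Suc k) \<subseteq> flag_sphere k"
    and odd: "\<And>x. x \<in> flag_sphere (Suc k) \<Longrightarrow> f (- x) = - f x"
  shows False
proof -
  have sub: "flag_sphere k \<subseteq> flag_sphere (Suc k)"
    by (simp add: flag_sphere_mono)
  have self: "odd_self_map (Suc k) f" and equator: "f ` flag_sphere k \<subseteq> flag_sphere k"
    using f odd sub by (auto simp: odd_self_map_def)
  have "flag_degree (Suc k) f = 0"
    using flag_degree_nonsurjective[OF k f(1) _ basis_vector_in_flag_sphere[OF order_refl k]]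
      basis_vector_notin_flag_sphere[OF k] f(2) sub by blast
  moreover have "even (flag_degree (Suc k) f - flag_degree k f)"
    by (rule flag_degree_Suc_even_diff[OF k self equator])
  moreover have "odd (flag_degree k f)"
    using k odd_self_map_restrict[OF self equator] by (intro odd_flag_degree_odd_self_map) auto
  ultimately show False
    by simp
qed

lemma obtain_odd_map_to_flag_sphere:
  fixes X :: "'b::real_normed_vector set"
  assumes j: "Suc j \<le> DIM('a)" and "odd_map_to_punctured X (Suc j)"
  obtains \<phi> :: "'b \<Rightarrow> 'a"
  where "continuous_on X \<phi>" "\<phi> ` X \<subseteq> flag_sphere j" "\<And>x. x \<in> X \<Longrightarrow> \<phi> (- x) = - \<phi> x"
proof -
  obtain g :: "nat \<Rightarrow> 'b \<Rightarrow> real"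
    where g: "\<forall>l<Suc j. continuous_on X (g l) \<and> (\<forall>x\<in>X. g l (- x) = - g l x)"
      "\<forall>x\<in>X. \<exists>l<Suc j. g l x \<noteq> 0"
    using assms(2) unfolding odd_map_to_punctured_def by blast
  define v where "v x = (\<Sum>l<Suc j. g l x *\<^sub>R b l)" for x
  have inner_v: "v x \<bullet> b i = (if i \<le> j then g i x else 0)" if i: "i < DIM('a)" for x i
  proof -
    have "v x \<bullet> b i = (\<Sum>l<Suc j. if l = i then g i x else 0)"
      unfolding v_def inner_sum_left
      by (rule sum.cong) (use i j in \<open>auto simp: inner_basis_vectors\<close>)
    then show ?thesis by simp
  qed
  have v_nz: "v x \<noteq> 0" if x: "x \<in> X" for x
  proof -
    obtain l where "l < Suc j" "g l x \<noteq> 0"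
      using g(2) x by blast
    then have "v x \<bullet> b l \<noteq> 0"
      using inner_v[of l x] j by simp
    then show ?thesis by auto
  qed
  show ?thesis
  proof
    have "continuous_on X v"
      unfolding v_def using g(1) by (intro continuous_on_sum continuous_on_scaleR) auto
    then show "continuous_on X (sgn \<circ> v)"
      unfolding o_def using v_nz by (intro continuous_on_sgn) auto
    have v_flag: "v x \<in> flag_subspace j" for x
      using inner_v by (auto simp: flag_subspace_def)
    show "(sgn \<circ> v) ` X \<subseteq> flag_sphere j"
    proof (rule image_subsetI)
      fix x assume "x \<in> X"
      then show "(sgn \<circ> v) x \<in> flag_sphere j"
        unfolding flag_sphere_def o_def
        by (rule sgn_in_sphere_Int_subspace[OF subspace_flag_subspace v_flag v_nz])
    qed
    show "(sgn \<circ> v) (- x) = - (sgn \<circ> v) x" if x: "x \<in> X" for x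
    proof -
      have "v (- x) = - v x"
        using g(1) x by (simp add: v_def flip: sum_negf)
      then show ?thesis
        by (simp add: sgn_minus)
    qed
  qed
qed

lemma odd_map_to_punctured_flag_sphere:
  assumes m: "m < DIM('a)" and odd_map: "odd_map_to_punctured (flag_sphere m) k"
  shows "m < k"
proof (rule ccontr)
  assume "\<not> m < k"
  have "k \<noteq> 0"
  proof
    assume "k = 0"
    then have "flag_sphere m = {}"
      using odd_map by (simp add: odd_map_to_punctured_0)
    then show False
      using basis_vector_in_flag_sphere[of 0 m] m by simp
  qed
  then obtain j where k: "k = Suc j"
    by (cases k) auto
  then have "Suc j \<le> m" and j: "Suc j < DIM('a)"
    using \<open>\<not> m < k\<close> m by simp_all
  have "odd_map_to_punctured (flag_sphere (Suc j)) (Suc j)"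
  proof (rule odd_map_to_punctured_pullback[where \<phi> = "\<lambda>x. x" and Y = "flag_sphere m"])
    show "(\<lambda>x. x) ` flag_sphere (Suc j) \<subseteq> flag_sphere m"
      using flag_sphere_mono[OF \<open>Suc j \<le> m\<close>] by simp
    show "odd_map_to_punctured (flag_sphere m) (Suc j)"
      using odd_map k by simp
  qed simp_all
  then obtain \<phi> :: "'a \<Rightarrow> 'a" where \<phi>: "continuous_on (flag_sphere (Suc j)) \<phi>"
    "\<phi> ` flag_sphere (Suc j) \<subseteq> flag_sphere j" "\<And>x. x \<in> flag_sphere (Suc j) \<Longrightarrow> \<phi> (- x) = - \<phi> x"
    using obtain_odd_map_to_flag_sphere[OF less_imp_le[OF j]] by blast
  show False
    by (rule borsuk_ulam_flag_sphere[OF j \<phi>])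
qed

end

section \<open>Genus of p-spheres in coordinate subspaces\<close>

definition coordinate_subspace :: "'n::finite set \<Rightarrow> (real^'n) set" where
  "coordinate_subspace S = {x. \<forall>i. i \<notin> S \<longrightarrow> x $ i = 0}"

lemma subspace_coordinate_subspace: "subspace (coordinate_subspace S)"
  by (auto simp: subspace_def coordinate_subspace_def)

lemma obtain_ordered_basis_with_coordinate_prefix:
  fixes S :: "'n::finite set"
  obtains b :: "nat \<Rightarrow> real^'n"
  where "ordered_basis b" "\<And>m. m < card S \<Longrightarrow> ordered_basis.flag_subspace b m \<subseteq> coordinate_subspace S"
proof -
  obtain xs ys where xs: "distinct xs" "set xs = S" and ys: "distinct ys" "set ys = - S"
    using finite_distinct_list[OF finite_class.finite, of S]
      finite_distinct_list[OF finite_class.finite, of "- S"] by blast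
  define zs where "zs = xs @ ys"
  have zs: "distinct zs" "set zs = UNIV"
    using xs ys by (auto simp: zs_def)
  then have zs_len: "length zs = CARD('n)"
    by (metis distinct_card)
  have xs_len: "length xs = card S"
    using xs distinct_card by fastforce
  define b where "b = (\<lambda>i. axis (zs ! i) (1::real))"
  have axis: "bij_betw (\<lambda>j. axis j (1::real)) (UNIV :: 'n set) Basis"
    by (auto simp: bij_betw_def inj_on_def axis_eq_axis Basis_vec_def)
  have "bij_betw b {..<DIM(real^'n)} Basis"
    using bij_betw_trans[OF bij_betw_nth[OF zs(1) refl zs(2)[symmetric]] axis] zs_len
    by (simp add: b_def o_def)
  then interpret ordered_basis b
    by unfold_locales
  show ?thesis
  proof (rule that)
    show "ordered_basis b" ..
    fix m assume m: "m < card S"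
    show "flag_subspace m \<subseteq> coordinate_subspace S"
    proof (clarsimp simp: coordinate_subspace_def)
      fix x j assume x: "x \<in> flag_subspace m" and j: "j \<notin> S"
      obtain i where i: "i < CARD('n)" "zs ! i = j"
        using zs(2) zs_len in_set_conv_nth[of j zs] by auto
      have "\<not> i < length xs"
        using i j xs by (auto simp: zs_def nth_append)
      then have "x \<bullet> b i = 0"
        using x i m xs_len by (auto simp: flag_subspace_def)
      then show "x $ j = 0"
        using i by (simp add: b_def inner_axis)
    qed
  qed
qed

lemma card_le_if_odd_map_to_punctured_coordinate_sphere:
  assumes "odd_map_to_punctured (sphere 0 1 \<inter> coordinate_subspace S) k"
  shows "card S \<le> k"
proof (cases "S = {}")
  case False
  then obtain m where m: "card S = Suc m"
    by (metis card_gt_0_iff finite gr0_implies_Suc)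
  obtain b :: "nat \<Rightarrow> real^'a" where b: "ordered_basis b"
    and flag: "ordered_basis.flag_subspace b m \<subseteq> coordinate_subspace S"
    using obtain_ordered_basis_with_coordinate_prefix[of S] m by (metis lessI)
  interpret ordered_basis b
    by (rule b)
  have "odd_map_to_punctured (flag_sphere m) k"
    using flag by (intro odd_map_to_punctured_pullback[OF continuous_on_id _ _ assms])
      (auto simp: flag_sphere_def)
  moreover have "m < DIM(real^'a)"
    using m card_mono[of UNIV S] by simp
  ultimately show ?thesis
    using odd_map_to_punctured_flag_sphere m by fastforce
qed simp

definition weighted_p_sum :: "('n::finite \<Rightarrow> real) \<Rightarrow> real \<Rightarrow> real^'n \<Rightarrow> real" where
  "weighted_p_sum mu p x = (\<Sum>i\<in>UNIV. mu i * \<bar>x $ i\<bar> powr p)"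

lemma p_sphere_eq: "p_sphere mu p = {x. weighted_p_sum mu p x = 1}"
  by (simp add: p_sphere_def weighted_p_sum_def)

lemma continuous_on_weighted_p_sum: "0 < p \<Longrightarrow> continuous_on X (weighted_p_sum mu p)"
  unfolding weighted_p_sum_def
  by (intro continuous_intros continuous_on_powr') auto

lemma weighted_p_sum_minus [simp]: "weighted_p_sum mu p (- x) = weighted_p_sum mu p x"
  by (simp add: weighted_p_sum_def)

lemma weighted_p_sum_scaleR:
  "0 \<le> c \<Longrightarrow> weighted_p_sum mu p (c *\<^sub>R x) = c powr p * weighted_p_sum mu p x"
  by (simp add: weighted_p_sum_def abs_mult powr_mult sum_distrib_left mult.left_commute)

lemma weighted_p_sum_pos:
  assumes "\<And>i. 0 < mu i" "x \<noteq> 0"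
  shows "0 < weighted_p_sum mu p x"
proof -
  obtain j where "x $ j \<noteq> 0"
    using assms(2) by (metis vec_eq_iff zero_index)
  then have "0 < mu j * \<bar>x $ j\<bar> powr p"
    using assms(1) by simp
  also have "\<dots> \<le> weighted_p_sum mu p x"
    unfolding weighted_p_sum_def
    by (rule member_le_sum) (auto intro!: mult_nonneg_nonneg less_imp_le[OF assms(1)])
  finally show ?thesis .
qed

definition p_normalize :: "('n::finite \<Rightarrow> real) \<Rightarrow> real \<Rightarrow> real^'n \<Rightarrow> real^'n" where
  "p_normalize mu p x = weighted_p_sum mu p x powr (- 1 / p) *\<^sub>R x"

lemma p_normalize_in_p_sphere:
  assumes "\<And>i. 0 < mu i" "0 < p" "x \<noteq> 0"
  shows "p_normalize mu p x \<in> p_sphere mu p"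
proof -
  have s: "0 < weighted_p_sum mu p x"
    by (rule weighted_p_sum_pos[OF assms(1,3)])
  then have "weighted_p_sum mu p (p_normalize mu p x)
      = (weighted_p_sum mu p x powr (- 1 / p)) powr p * weighted_p_sum mu p x"
    by (simp add: p_normalize_def weighted_p_sum_scaleR)
  also have "\<dots> = weighted_p_sum mu p x powr (- 1) * weighted_p_sum mu p x powr 1"
    using s assms(2) by (simp add: powr_powr)
  also have "\<dots> = 1"
    using s by (simp flip: powr_add)
  finally show ?thesis
    by (simp add: p_sphere_eq)
qed

lemma p_normalize_minus: "p_normalize mu p (- x) = - p_normalize mu p x"
  by (simp add: p_normalize_def)

lemma continuous_on_p_normalize:
  assumes "\<And>i. 0 < mu i" "0 < p"
  shows "continuous_on (- {0}) (p_normalize mu p)"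
  unfolding p_normalize_def
  using weighted_p_sum_pos[of mu _ p, OF assms(1)]
  by (intro continuous_intros continuous_on_weighted_p_sum assms(2)) fastforce

lemma kras_genus_p_sphere_coordinate_subspace:
  assumes mu: "\<And>i. 0 < mu i" and p: "0 < p"
  shows "enat (card S) \<le> kras_genus (p_sphere mu p \<inter> coordinate_subspace S)"
proof (rule enat_le_kras_genus)
  fix k assume "odd_map_to_punctured (p_sphere mu p \<inter> coordinate_subspace S) k"
  then have "odd_map_to_punctured (sphere 0 1 \<inter> coordinate_subspace S) k"
  proof (rule odd_map_to_punctured_pullback[of _ "p_normalize mu p", rotated 3])
    show "continuous_on (sphere 0 1 \<inter> coordinate_subspace S) (p_normalize mu p)"
      by (rule continuous_on_subset[OF continuous_on_p_normalize[OF mu p]]) auto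
    show "p_normalize mu p ` (sphere 0 1 \<inter> coordinate_subspace S)
        \<subseteq> p_sphere mu p \<inter> coordinate_subspace S"
    proof (rule image_subsetI)
      fix x assume x: "x \<in> sphere 0 1 \<inter> coordinate_subspace S"
      then have "x \<noteq> 0" by auto
      then show "p_normalize mu p x \<in> p_sphere mu p \<inter> coordinate_subspace S"
        using p_normalize_in_p_sphere[of mu, OF mu p] x
          subspace_mul[OF subspace_coordinate_subspace] by (auto simp: p_normalize_def)
    qed
  qed (simp add: p_normalize_minus)
  then show "card S \<le> k"
    by (rule card_le_if_odd_map_to_punctured_coordinate_sphere)
qed

lemma compact_p_sphere:
  assumes mu: "\<And>i. 0 < mu i" and p: "0 < p"
  shows "compact (p_sphere mu p)"
  unfolding compact_eq_bounded_closed
proof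
  show "closed (p_sphere mu p)"
    unfolding p_sphere_eq
    by (intro closed_Collect_eq continuous_on_weighted_p_sum p continuous_on_const)
  have "norm x \<le> (\<Sum>i\<in>UNIV. (1 / mu i) powr (1 / p))" if x: "x \<in> p_sphere mu p" for x
  proof -
    have "\<bar>x $ i\<bar> \<le> (1 / mu i) powr (1 / p)" for i
    proof -
      have "mu i * \<bar>x $ i\<bar> powr p \<le> weighted_p_sum mu p x"
        unfolding weighted_p_sum_def
        by (rule member_le_sum) (auto intro!: mult_nonneg_nonneg less_imp_le[OF mu])
      then have "\<bar>x $ i\<bar> powr p \<le> 1 / mu i"
        using x mu[of i] by (simp add: p_sphere_eq field_simps mult.commute)
      then have "(\<bar>x $ i\<bar> powr p) powr (1 / p) \<le> (1 / mu i) powr (1 / p)"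
        using p by (intro powr_mono2) auto
      then show ?thesis
        using p by (simp add: powr_powr)
    qed
    then show ?thesis
      using norm_le_l1_cart[of x] sum_mono[of UNIV "\<lambda>i. \<bar>x $ i\<bar>"] by (meson order_trans)
  qed
  then show "bounded (p_sphere mu p)"
    unfolding bounded_iff by blast
qed

lemma uminus_image_eq_self:
  fixes B :: "'a::group_add set"
  assumes "\<And>x. x \<in> B \<Longrightarrow> - x \<in> B"
  shows "uminus ` B = B"
  using assms by (auto simp: image_iff) (metis minus_minus)

lemma p_sphere_coordinate_subspace_in_genus_family:
  assumes "\<And>i. 0 < mu i" "0 < p"
  shows "p_sphere mu p \<inter> coordinate_subspace S \<in> genus_family (card S) (p_sphere mu p)"
  unfolding genus_family_def
  using kras_genus_p_sphere_coordinate_subspace[of mu, OF assms, of S]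
    compact_imp_closed[OF compact_p_sphere[of mu, OF assms]]
    closed_subspace[OF subspace_coordinate_subspace, of S]
  by (auto intro!: uminus_image_eq_self simp: p_sphere_eq coordinate_subspace_def)

section \<open>Rayleigh quotients\<close>

lemma continuous_on_rayleigh_p:
  "0 < p \<Longrightarrow> continuous_on (p_sphere mu p) (rayleigh_p adj sg w mu kappa p)"
  unfolding rayleigh_p_def
  by (intro continuous_intros continuous_on_powr')
    (auto simp: p_sphere_def)

lemma bounded_rayleigh_p:
  assumes "\<And>i. 0 < mu i" "0 < p"
  shows "bounded (rayleigh_p adj sg w mu kappa p ` p_sphere mu p)"
  by (intro compact_imp_bounded compact_continuous_image continuous_on_rayleigh_p
      compact_p_sphere[of mu, OF assms] assms(2))

lemma var_eigenvalue_le: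
  assumes mu: "\<And>i. 0 < mu i" and p: "0 < p" and k: "0 < k"
    and B: "B \<in> genus_family k (p_sphere mu p)"
    and bound: "\<And>f. f \<in> B \<Longrightarrow> rayleigh_p adj sg w mu kappa p f \<le> M"
  shows "var_eigenvalue adj sg w mu kappa p k \<le> M"
proof -
  let ?R = "rayleigh_p adj sg w mu kappa p" and ?F = "genus_family k (p_sphere mu p)"
  obtain c where c: "\<And>f. f \<in> p_sphere mu p \<Longrightarrow> \<bar>?R f\<bar> \<le> c"
    using bounded_rayleigh_p[of mu, OF mu p] unfolding bounded_real by blast
  have nonempty: "B' \<noteq> {}" and bdd: "bdd_above (?R ` B')" if B': "B' \<in> ?F" for B'
    using B' nonempty_if_kras_genus_ge[OF _ k] c
    by (auto simp: genus_family_def abs_le_iff intro!: bdd_aboveI[of _ c])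
  have "- c \<le> Sup (?R ` B')" if B': "B' \<in> ?F" for B'
  proof -
    obtain f where f: "f \<in> B'"
      using nonempty[OF B'] by blast
    then have "?R f \<le> Sup (?R ` B')"
      using bdd[OF B'] by (intro cSup_upper) auto
    then show ?thesis
      using c[of f] f B' by (auto simp: genus_family_def)
  qed
  then have "bdd_below ((\<lambda>B. Sup (?R ` B)) ` ?F)"
    by (intro bdd_belowI[of _ "- c"]) auto
  then have "var_eigenvalue adj sg w mu kappa p k \<le> Sup (?R ` B)"
    unfolding var_eigenvalue_def using B by (intro cInf_lower) auto
  also have "\<dots> \<le> M"
    using nonempty[OF B] bound by (intro cSup_least) auto
  finally show ?thesis .
qed

lemma edge_sum_independent_support:
  fixes f :: "real^'n::finite"
  assumes sym: "\<And>i j. adj i j \<Longrightarrow> adj j i" and w: "\<And>i j. adj i j \<Longrightarrow> w i j = w j i"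
    and sg: "\<And>i j. adj i j \<Longrightarrow> \<bar>sg i j\<bar> = 1"
    and supp: "\<And>i j. adj i j \<Longrightarrow> f $ i = 0 \<or> f $ j = 0"
  shows "(\<Sum>i\<in>UNIV. \<Sum>j\<in>{j. adj i j}. w i j * \<bar>f $ i - sg i j * f $ j\<bar> powr p)
       = 2 * (\<Sum>i\<in>UNIV. (\<Sum>j\<in>{j. adj i j}. w i j) * \<bar>f $ i\<bar> powr p)"
proof -
  define a where "a i = \<bar>f $ i\<bar> powr p" for i
  have edge: "\<bar>f $ i - sg i j * f $ j\<bar> powr p = a i + a j" if "adj i j" for i j
    using supp[OF that] sg[OF that] by (auto simp: a_def abs_mult)
  have "(\<Sum>i\<in>UNIV. \<Sum>j\<in>{j. adj i j}. w i j * a j) = (\<Sum>j\<in>UNIV. \<Sum>i\<in>{i. adj i j}. w i j * a j)"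
    using sum.swap_restrict[of UNIV UNIV "\<lambda>i j. w i j * a j" adj] by simp
  also have "\<dots> = (\<Sum>j\<in>UNIV. (\<Sum>i\<in>{i. adj j i}. w j i) * a j)"
    using sym w by (intro sum.cong refl) (auto simp: sum_distrib_right intro!: sum.cong)
  finally have swap: "(\<Sum>i\<in>UNIV. \<Sum>j\<in>{j. adj i j}. w i j * a j)
      = (\<Sum>i\<in>UNIV. (\<Sum>j\<in>{j. adj i j}. w i j) * a i)" .
  have "(\<Sum>i\<in>UNIV. \<Sum>j\<in>{j. adj i j}. w i j * \<bar>f $ i - sg i j * f $ j\<bar> powr p)
      = (\<Sum>i\<in>UNIV. \<Sum>j\<in>{j. adj i j}. w i j * a i + w i j * a j)"
    by (intro sum.cong refl) (simp add: edge distrib_left)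
  also have "\<dots> = 2 * (\<Sum>i\<in>UNIV. (\<Sum>j\<in>{j. adj i j}. w i j) * a i)"
    by (simp add: sum.distrib swap sum_distrib_right)
  finally show ?thesis
    by (simp add: a_def)
qed

lemma rayleigh_p_le_on_independent_coordinate_subspace:
  fixes adj :: "'n::finite \<Rightarrow> 'n \<Rightarrow> bool"
  assumes "simple_graph adj" and w: "\<And>i j. adj i j \<Longrightarrow> w i j = w j i"
    and sg: "\<And>i j. adj i j \<Longrightarrow> sg i j \<in> {-1, 1}" and mu: "\<And>i. 0 < mu i"
    and S: "independent_set adj S" and f: "f \<in> p_sphere mu p \<inter> coordinate_subspace S"
  shows "rayleigh_p adj sg w mu kappa p f
    \<le> Max (range (\<lambda>i. ((\<Sum>j\<in>{j. adj i j}. w i j) + kappa i) / mu i))"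
    (is "_ \<le> ?M")
proof -
  have sym: "\<And>i j. adj i j \<Longrightarrow> adj j i"
    using assms(1) by (simp add: simple_graph_def)
  have sg_abs: "\<And>i j. adj i j \<Longrightarrow> \<bar>sg i j\<bar> = 1"
    using sg by fastforce
  have supp: "\<And>i j. adj i j \<Longrightarrow> f $ i = 0 \<or> f $ j = 0"
    using S f by (auto simp: independent_set_def coordinate_subspace_def)
  have den: "(\<Sum>i\<in>UNIV. mu i * \<bar>f $ i\<bar> powr p) = 1"
    using f by (simp add: p_sphere_def)
  have edges: "(1/2) * (\<Sum>i\<in>UNIV. \<Sum>j\<in>{j. adj i j}. w i j * \<bar>f $ i - sg i j * f $ j\<bar> powr p)
      = (\<Sum>i\<in>UNIV. (\<Sum>j\<in>{j. adj i j}. w i j) * \<bar>f $ i\<bar> powr p)"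
    using edge_sum_independent_support[of adj w sg f p] sym w sg_abs supp by simp
  have "rayleigh_p adj sg w mu kappa p f
      = (\<Sum>i\<in>UNIV. (\<Sum>j\<in>{j. adj i j}. w i j) * \<bar>f $ i\<bar> powr p)
        + (\<Sum>i\<in>UNIV. kappa i * \<bar>f $ i\<bar> powr p)"
    by (simp only: rayleigh_p_def edges den div_by_1)
  also have "\<dots> = (\<Sum>i\<in>UNIV. ((\<Sum>j\<in>{j. adj i j}. w i j) + kappa i) * \<bar>f $ i\<bar> powr p)"
    by (simp add: distrib_right sum.distrib)
  also have "\<dots> \<le> (\<Sum>i\<in>UNIV. ?M * (mu i * \<bar>f $ i\<bar> powr p))"
  proof (rule sum_mono)
    fix i
    have "((\<Sum>j\<in>{j. adj i j}. w i j) + kappa i) / mu i \<le> ?M"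
      by (rule Max_ge) auto
    then have "(\<Sum>j\<in>{j. adj i j}. w i j) + kappa i \<le> ?M * mu i"
      using mu[of i] by (simp add: divide_le_eq)
    then have "((\<Sum>j\<in>{j. adj i j}. w i j) + kappa i) * \<bar>f $ i\<bar> powr p
        \<le> (?M * mu i) * \<bar>f $ i\<bar> powr p"
      by (rule mult_right_mono) simp
    then show "((\<Sum>j\<in>{j. adj i j}. w i j) + kappa i) * \<bar>f $ i\<bar> powr p
        \<le> ?M * (mu i * \<bar>f $ i\<bar> powr p)"
      by (simp only: mult.assoc)
  qed
  also have "\<dots> = ?M"
    using f by (simp add: p_sphere_def flip: sum_distrib_left)
  finally show ?thesis .
qed

lemma independence_number_attained:
  "\<exists>S. independent_set adj S \<and> card S = independence_number adj"
proof -
  have "finite (card ` {S. independent_set adj S})" "{} \<in> {S. independent_set adj S}"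
    by (auto simp: independent_set_def)
  then have "independence_number adj \<in> card ` {S. independent_set adj S}"
    unfolding independence_number_def by (intro Max_in) auto
  then show ?thesis by auto
qed

lemma independence_number_pos:
  fixes adj :: "'n::finite \<Rightarrow> 'n \<Rightarrow> bool"
  assumes "\<And>i. \<not> adj i i"
  shows "0 < independence_number adj"
proof -
  have "independent_set adj {undefined}"
    using assms by (simp add: independent_set_def)
  then have "card {undefined :: 'n} \<in> card ` {S. independent_set adj S}"
    by blast
  then have "card {undefined :: 'n} \<le> independence_number adj"
    unfolding independence_number_def by (intro Max_ge) auto
  then show ?thesis by simp
qed

theorem proposition6p6:
  fixes adj :: "'n::finite \<Rightarrow> 'n \<Rightarrow> bool"
    and sg w :: "'n \<Rightarrow> 'n \<Rightarrow> real"
    and mu kappa :: "'n \<Rightarrow> real"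
    and p :: real
  assumes "simple_graph adj"
    and "\<And>i j. adj i j \<Longrightarrow> sg i j \<in> {-1, 1} \<and> sg i j = sg j i"
    and "\<And>i j. adj i j \<Longrightarrow> w i j > 0 \<and> w i j = w j i"
    and "\<And>i. mu i > 0"
    and "p > 1"
  shows "var_eigenvalue adj sg w mu kappa p (independence_number adj)
           \<le> Max (range (\<lambda>i. ((\<Sum>j\<in>{j. adj i j}. w i j) + kappa i) / mu i))"
proof -
  obtain S where S: "independent_set adj S" "card S = independence_number adj"
    using independence_number_attained by blast
  have p: "0 < p"
    using assms(5) by simp
  have "var_eigenvalue adj sg w mu kappa p (card S)
      \<le> Max (range (\<lambda>i. ((\<Sum>j\<in>{j. adj i j}. w i j) + kappa i) / mu i))"
  proof (rule var_eigenvalue_le)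
    show "0 < card S"
      using S(2) assms(1) independence_number_pos by (metis simple_graph_def)
    show "p_sphere mu p \<inter> coordinate_subspace S \<in> genus_family (card S) (p_sphere mu p)"
      by (rule p_sphere_coordinate_subspace_in_genus_family) (use assms(4) p in auto)
    show "rayleigh_p adj sg w mu kappa p f
        \<le> Max (range (\<lambda>i. ((\<Sum>j\<in>{j. adj i j}. w i j) + kappa i) / mu i))"
      if "f \<in> p_sphere mu p \<inter> coordinate_subspace S" for f
      by (rule rayleigh_p_le_on_independent_coordinate_subspace[OF assms(1) _ _ _ S(1) that])
        (use assms(2-4) in blast)+
  qed (use assms(4) p in auto)
  then show ?thesis
    using S(2) by simp
qed

end
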